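(* Let $m\ge 38$ be even and let $G$ be a graph with maximum spectral radius among all $H(4,3)$-free graphs with $m$ edges and no isolated vertices. Let $\mathbf{x}$ be the Perron vector of $G$, $u^*$ a vertex maximizing $x_{u^*}$, $N = N(u^* )$, and $A_+ = \{v\in N : d_N(v)\ge 1\}$. Then the induced subgraph $G[A_+]$ is connected.
   Context: All graphs are simple and undirected; $\rho(G)$ is the largest adjacency eigenvalue and the Perron vector is the positive unit eigenvector for $\rho(G)$ (the extremal $G$ is connected). $H(4,3)$ is the graph formed by a cycle of length $4$ and a triangle sharing exactly one common vertex. $N(v)$ denotes the neighbourhood of $v$, $d_S(v)=|N(v)\cap S|$, and $G[S]$ is the subgraph induced by $S$. *)

theory Defs
  imports Main "HOL-Library.Disjoint_Sets" Complex_Main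
begin

definition graph :: "'a set \<Rightarrow> ('a \<Rightarrow> 'a \<Rightarrow> bool) \<Rightarrow> bool" where
  "graph V E \<longleftrightarrow> finite V \<and> (\<forall>u v. E u v \<longrightarrow> u \<in> V \<and> v \<in> V \<and> u \<noteq> v \<and> E v u)"

definition edges :: "'a set \<Rightarrow> ('a \<Rightarrow> 'a \<Rightarrow> bool) \<Rightarrow> 'a set set" where
  "edges V E = {{u, v} | u v. u \<in> V \<and> v \<in> V \<and> E u v}"

definition num_edges :: "'a set \<Rightarrow> ('a \<Rightarrow> 'a \<Rightarrow> bool) \<Rightarrow> nat" where
  "num_edges V E = card (edges V E)"

definition no_isolated :: "'a set \<Rightarrow> ('a \<Rightarrow> 'a \<Rightarrow> bool) \<Rightarrow> bool" where
  "no_isolated V E \<longleftrightarrow> (\<forall>v\<in>V. \<exists>u\<in>V. E v u)"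

definition nbhd :: "'a set \<Rightarrow> ('a \<Rightarrow> 'a \<Rightarrow> bool) \<Rightarrow> 'a \<Rightarrow> 'a set" where
  "nbhd V E v = {u \<in> V. E v u}"

definition adj_eigvec :: "'a set \<Rightarrow> ('a \<Rightarrow> 'a \<Rightarrow> bool) \<Rightarrow> real \<Rightarrow> ('a \<Rightarrow> real) \<Rightarrow> bool" where
  "adj_eigvec V E lam x \<longleftrightarrow> (\<exists>v\<in>V. x v \<noteq> 0) \<and>
     (\<forall>v\<in>V. (\<Sum>u\<in>nbhd V E v. x u) = lam * x v)"

definition adj_eigenvalue :: "'a set \<Rightarrow> ('a \<Rightarrow> 'a \<Rightarrow> bool) \<Rightarrow> real \<Rightarrow> bool" where
  "adj_eigenvalue V E lam \<longleftrightarrow> (\<exists>x. adj_eigvec V E lam x)"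

text \<open>Spectral radius: the largest adjacency eigenvalue (all eigenvalues are real).\<close>
definition spectral_radius :: "'a set \<Rightarrow> ('a \<Rightarrow> 'a \<Rightarrow> bool) \<Rightarrow> real" where
  "spectral_radius V E = Max {lam. adj_eigenvalue V E lam}"

definition perron_vector :: "'a set \<Rightarrow> ('a \<Rightarrow> 'a \<Rightarrow> bool) \<Rightarrow> ('a \<Rightarrow> real) \<Rightarrow> bool" where
  "perron_vector V E x \<longleftrightarrow> (\<forall>v\<in>V. x v > 0) \<and> (\<Sum>v\<in>V. (x v)^2) = 1 \<and>
     adj_eigvec V E (spectral_radius V E) x"

text \<open>H(4,3): a 4-cycle a-b-c-d-a and a triangle a-e-f-a sharing exactly the vertex a.
  H(4,3)-free: no (not necessarily induced) subgraph isomorphic to H(4,3).\<close>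
definition H43_free :: "'a set \<Rightarrow> ('a \<Rightarrow> 'a \<Rightarrow> bool) \<Rightarrow> bool" where
  "H43_free V E \<longleftrightarrow> \<not> (\<exists>a\<in>V. \<exists>b\<in>V. \<exists>c\<in>V. \<exists>d\<in>V. \<exists>e\<in>V. \<exists>f\<in>V.
      distinct [a, b, c, d, e, f] \<and>
      E a b \<and> E b c \<and> E c d \<and> E d a \<and> E a e \<and> E e f \<and> E f a)"

definition induced_connected :: "('a \<Rightarrow> 'a \<Rightarrow> bool) \<Rightarrow> 'a set \<Rightarrow> bool" where
  "induced_connected E S \<longleftrightarrow>
     (\<forall>a\<in>S. \<forall>b\<in>S. (\<lambda>u v. u \<in> S \<and> v \<in> S \<and> E u v)\<^sup>*\<^sup>* a b)"

end

(*
  Lower bound: the book K_2 v kK_1 (k triangles on a common edge) with a pendant edge at a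
  spine vertex is H(4,3)-free, has m = 2k + 2 edges, and its spectral radius r satisfies
  r^2 - r > 2k; by extremality rho = rho(G) satisfies rho^2 - rho > m - 2.

  Upper bound if G[A_+] is disconnected: a vertex w of N with two neighbours p, q in N,
  together with an edge cc' of a component of G[A_+] not containing w, gives the 4-cycle
  u*-p-w-q and the triangle u*-c-c', i.e. an H(4,3). Hence G[N] has maximum degree at most 1,
  so rho^2 x_u* = sum over v in N of (A x)_v <= rho x_u* + e(N, V - N) x_u*. As G[N] still
  contains two edges, e(N, V - N) <= m - 2, a contradiction.
*)
theory Submission
  imports Defs "HOL-Computational_Algebra.Polynomial"
begin

lemma graph_adjD: "graph V E \<Longrightarrow> E u v \<Longrightarrow> u \<in> V \<and> v \<in> V \<and> u \<noteq> v \<and> E v u"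
  unfolding graph_def by blast

lemma graph_adj_commute: "graph V E \<Longrightarrow> E u v \<longleftrightarrow> E v u"
  unfolding graph_def by blast

lemma graph_finite: "graph V E \<Longrightarrow> finite V"
  unfolding graph_def by blast

lemma nbhd_subset: "nbhd V E v \<subseteq> V"
  unfolding nbhd_def by auto

lemma finite_nbhd: "graph V E \<Longrightarrow> finite (nbhd V E v)"
  by (rule finite_subset[OF nbhd_subset graph_finite])

lemma not_mem_nbhd_self: "graph V E \<Longrightarrow> u \<notin> nbhd V E u"
  unfolding graph_def nbhd_def by blast

abbreviation induced_walk :: "('a \<Rightarrow> 'a \<Rightarrow> bool) \<Rightarrow> 'a set \<Rightarrow> 'a \<Rightarrow> 'a \<Rightarrow> bool" where
  "induced_walk E S \<equiv> (\<lambda>u v. u \<in> S \<and> v \<in> S \<and> E u v)\<^sup>*\<^sup>*"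

lemma induced_walk_sym:
  assumes "graph V E" and "induced_walk E S a b"
  shows "induced_walk E S b a"
proof -
  have "symp (\<lambda>u v. u \<in> S \<and> v \<in> S \<and> E u v)"
    using graph_adjD[OF assms(1)] by (auto intro: sympI)
  then show ?thesis
    using assms(2) symp_rtranclp by (metis sympD)
qed

text \<open>For \<open>S = N(u*)\<close> this is the set \<open>A\<^sub>+\<close> of the statement.\<close>

definition nonisolated_part :: "'a set \<Rightarrow> ('a \<Rightarrow> 'a \<Rightarrow> bool) \<Rightarrow> 'a set \<Rightarrow> 'a set" where
  "nonisolated_part V E S = {v \<in> S. card (nbhd V E v \<inter> S) \<ge> 1}"

lemma mem_nonisolated_part_iff:
  assumes "graph V E" and "S \<subseteq> V"
  shows "v \<in> nonisolated_part V E S \<longleftrightarrow> v \<in> S \<and> (\<exists>w\<in>S. E v w)"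
  using assms finite_nbhd[OF assms(1), of v]
  by (auto simp: nonisolated_part_def nbhd_def card_gt_0_iff Suc_le_eq)

lemma edge_outside_component:
  assumes "graph V E" and "\<not> induced_connected E A" and partner: "\<forall>v\<in>A. \<exists>v'\<in>A. E v v'"
  obtains c c' where "c \<in> A" "c' \<in> A" "E c c'"
    "\<not> induced_walk E A w c" "\<not> induced_walk E A w c'"
proof -
  obtain a b where "a \<in> A" "b \<in> A" and ab: "\<not> induced_walk E A a b"
    using assms(2) unfolding induced_connected_def by blast
  have "\<not> induced_walk E A w a \<or> \<not> induced_walk E A w b"
  proof (rule ccontr)
    assume "\<not> ?thesis"
    then have "induced_walk E A a w" and "induced_walk E A w b"
      using induced_walk_sym[OF assms(1)] by auto
    then have "induced_walk E A a b"
      by (rule rtranclp_trans)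
    with ab show False ..
  qed
  then obtain c where "c \<in> A" and wc: "\<not> induced_walk E A w c"
    using \<open>a \<in> A\<close> \<open>b \<in> A\<close> by blast
  then obtain c' where "c' \<in> A" and "E c c'"
    using partner by blast
  have "\<not> induced_walk E A w c'"
  proof
    assume "induced_walk E A w c'"
    moreover have "induced_walk E A c' c"
      using \<open>c \<in> A\<close> \<open>c' \<in> A\<close> \<open>E c c'\<close> graph_adjD[OF assms(1)] by (simp add: r_into_rtranclp)
    ultimately show False
      using wc rtranclp_trans by fast
  qed
  with \<open>c \<in> A\<close> \<open>c' \<in> A\<close> \<open>E c c'\<close> wc show thesis
    using that by blast
qed

lemma not_H43_free_if_nbhd_path_and_edge:
  assumes "graph V E" and "u \<in> V" and "{p, w, q, c, c'} \<subseteq> nbhd V E u"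
    and "distinct [p, w, q, c, c']" and "E w p" and "E w q" and "E c c'"
  shows "\<not> H43_free V E"
proof -
  have "u \<notin> {p, w, q, c, c'}"
    using assms(3) not_mem_nbhd_self[OF assms(1)] by blast
  then have "distinct [u, p, w, q, c, c']"
    using assms(4) by auto
  moreover have "E u p" "E u q" "E u c" "E u c'" "p \<in> V" "w \<in> V" "q \<in> V" "c \<in> V" "c' \<in> V"
    using assms(3) by (auto simp: nbhd_def)
  ultimately show ?thesis
    unfolding H43_free_def using assms(1,2,5-7) graph_adjD by metis
qed

lemma nbhd_degree_le_one_if_not_induced_connected:
  assumes "graph V E" and "H43_free V E" and "u \<in> V"
    and disconnected: "\<not> induced_connected E (nonisolated_part V E (nbhd V E u))"
    and "w \<in> nbhd V E u"
  shows "card (nbhd V E w \<inter> nbhd V E u) \<le> 1"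
proof (rule ccontr)
  define N where "N = nbhd V E u"
  define A where "A = nonisolated_part V E N"
  have A_iff: "v \<in> A \<longleftrightarrow> v \<in> N \<and> (\<exists>v'\<in>N. E v v')" for v
    unfolding A_def N_def using mem_nonisolated_part_iff[OF assms(1) nbhd_subset] .
  assume "\<not> card (nbhd V E w \<inter> nbhd V E u) \<le> 1"
  moreover have "finite (nbhd V E w \<inter> N)"
    by (simp add: finite_nbhd[OF assms(1)])
  ultimately obtain p q where "p \<in> nbhd V E w \<inter> N" "q \<in> nbhd V E w \<inter> N" "p \<noteq> q"
    unfolding N_def using card_le_Suc0_iff_eq by (metis One_nat_def)
  then have "E w p" "E w q" "p \<in> N" "q \<in> N"
    by (auto simp: nbhd_def)
  have "\<forall>v\<in>A. \<exists>v'\<in>A. E v v'"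
    using A_iff graph_adjD[OF assms(1)] by meson
  then obtain c c' where "c \<in> A" "c' \<in> A" "E c c'" and
    far: "\<not> induced_walk E A w c" "\<not> induced_walk E A w c'"
    using edge_outside_component[OF assms(1) disconnected[folded N_def A_def]] by blast
  have "w \<in> A" "p \<in> A" "q \<in> A"
    using A_iff graph_adjD[OF assms(1)] \<open>E w p\<close> \<open>E w q\<close> \<open>p \<in> N\<close> \<open>q \<in> N\<close> assms(5)
    unfolding N_def by meson+
  then have "induced_walk E A w w" "induced_walk E A w p" "induced_walk E A w q"
    using \<open>E w p\<close> \<open>E w q\<close> by auto
  then have "distinct [p, w, q, c, c']"
    using far \<open>p \<noteq> q\<close> \<open>E c c'\<close> \<open>E w p\<close> \<open>E w q\<close> graph_adjD[OF assms(1)] by auto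
  moreover have "{p, w, q, c, c'} \<subseteq> N"
    using \<open>c \<in> A\<close> \<open>c' \<in> A\<close> \<open>p \<in> N\<close> \<open>q \<in> N\<close> assms(5) A_iff unfolding N_def by auto
  ultimately show False
    using not_H43_free_if_nbhd_path_and_edge[OF assms(1,3)] \<open>E w p\<close> \<open>E w q\<close> \<open>E c c'\<close> assms(2)
    unfolding N_def by blast
qed

lemma two_edges_if_not_induced_connected:
  assumes "graph V E" and "S \<subseteq> V" and disconnected: "\<not> induced_connected E (nonisolated_part V E S)"
  obtains a a' b b' where "{a, a', b, b'} \<subseteq> S" "E a a'" "E b b'" "{a, a'} \<noteq> {b, b'}"
proof -
  define A where "A = nonisolated_part V E S"
  have A_iff: "v \<in> A \<longleftrightarrow> v \<in> S \<and> (\<exists>v'\<in>S. E v v')" for v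
    unfolding A_def using mem_nonisolated_part_iff[OF assms(1,2)] .
  have partner: "\<forall>v\<in>A. \<exists>v'\<in>A. E v v'"
    using A_iff graph_adjD[OF assms(1)] by meson
  obtain a where "a \<in> A"
    using disconnected unfolding A_def induced_connected_def by blast
  then obtain a' where "a' \<in> A" "E a a'"
    using partner by blast
  obtain b b' where "b \<in> A" "b' \<in> A" "E b b'" and
    "\<not> induced_walk E A a b" "\<not> induced_walk E A a b'"
    using edge_outside_component[OF assms(1) disconnected[folded A_def] partner] by blast
  then have "a \<notin> {b, b'}"
    by auto
  then have "{a, a'} \<noteq> {b, b'}"
    by blast
  moreover have "{a, a', b, b'} \<subseteq> S"
    using \<open>a \<in> A\<close> \<open>a' \<in> A\<close> \<open>b \<in> A\<close> \<open>b' \<in> A\<close> A_iff by blast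
  ultimately show thesis
    using that \<open>E a a'\<close> \<open>E b b'\<close> by blast
qed

definition boundary_edges :: "'a set \<Rightarrow> ('a \<Rightarrow> 'a \<Rightarrow> bool) \<Rightarrow> 'a set \<Rightarrow> 'a set set" where
  "boundary_edges V E S = (\<Union>v\<in>S. (\<lambda>w. {v, w}) ` (nbhd V E v - S))"

lemma card_boundary_edges:
  assumes "graph V E" and "S \<subseteq> V"
  shows "card (boundary_edges V E S) = (\<Sum>v\<in>S. card (nbhd V E v - S))"
  unfolding boundary_edges_def
proof (subst card_UN_disjoint)
  show "finite S"
    using assms finite_subset graph_finite by blast
  show "\<forall>v\<in>S. finite ((\<lambda>w. {v, w}) ` (nbhd V E v - S))"
    using finite_nbhd[OF assms(1)] by blast
  show "\<forall>v\<in>S. \<forall>v'\<in>S. v \<noteq> v' \<longrightarrow>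
      (\<lambda>w. {v, w}) ` (nbhd V E v - S) \<inter> (\<lambda>w. {v', w}) ` (nbhd V E v' - S) = {}"
    by (auto simp: doubleton_eq_iff)
  show "(\<Sum>v\<in>S. card ((\<lambda>w. {v, w}) ` (nbhd V E v - S))) = (\<Sum>v\<in>S. card (nbhd V E v - S))"
    by (intro sum.cong refl card_image) (auto simp: inj_on_def doubleton_eq_iff)
qed

lemma boundary_edges_subset_edges:
  assumes "S \<subseteq> V"
  shows "boundary_edges V E S \<subseteq> edges V E"
  using assms unfolding boundary_edges_def edges_def nbhd_def by blast

lemma card_boundary_edges_add_two_le_num_edges:
  assumes "graph V E" and "S \<subseteq> V"
    and "{a, a', b, b'} \<subseteq> S" and "E a a'" and "E b b'" and "{a, a'} \<noteq> {b, b'}"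
  shows "card (boundary_edges V E S) + 2 \<le> num_edges V E"
proof -
  let ?T = "{{a, a'}, {b, b'}}"
  have "finite (edges V E)"
    using graph_finite[OF assms(1)] unfolding edges_def by (auto intro: finite_subset[of _ "Pow V"])
  moreover have "boundary_edges V E S \<union> ?T \<subseteq> edges V E"
    using boundary_edges_subset_edges[OF assms(2)] assms(2-5) unfolding edges_def by blast
  moreover have "boundary_edges V E S \<inter> ?T = {}"
    using assms(3) unfolding boundary_edges_def by auto
  moreover have "card ?T = 2"
    using assms(6) by simp
  ultimately show ?thesis
    unfolding num_edges_def
    by (metis card_Un_disjoint card_mono finite_Un finite_subset)
qed

lemma sum_sum_nbhd_Int:
  fixes f :: "'a \<Rightarrow> 'b::comm_semiring_1"
  assumes "graph V E" and "S \<subseteq> V"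
  shows "(\<Sum>v\<in>S. \<Sum>w\<in>nbhd V E v \<inter> S. f w) = (\<Sum>w\<in>S. of_nat (card (nbhd V E w \<inter> S)) * f w)"
proof -
  have "finite S"
    using assms finite_subset graph_finite by blast
  have Int_eq: "nbhd V E v \<inter> S = {w\<in>S. E v w}" for v
    using assms(2) unfolding nbhd_def by auto
  have Int_eq': "nbhd V E w \<inter> S = {v\<in>S. E v w}" for w
    unfolding Int_eq using graph_adj_commute[OF assms(1)] by simp
  have "(\<Sum>v\<in>S. \<Sum>w\<in>nbhd V E v \<inter> S. f w) = (\<Sum>v\<in>S. \<Sum>w\<in>S. if E v w then f w else 0)"
    unfolding Int_eq by (simp add: sum.inter_filter[OF \<open>finite S\<close>])
  also have "\<dots> = (\<Sum>w\<in>S. \<Sum>v\<in>S. if E v w then f w else 0)"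
    by (rule sum.swap)
  also have "\<dots> = (\<Sum>w\<in>S. of_nat (card {v\<in>S. E v w}) * f w)"
    by (simp add: sum.inter_filter[OF \<open>finite S\<close>, symmetric])
  also have "\<dots> = (\<Sum>w\<in>S. of_nat (card (nbhd V E w \<inter> S)) * f w)"
    unfolding Int_eq' ..
  finally show ?thesis .
qed

lemma eigenvalue_sq_le_boundary_edges:
  fixes x :: "'a \<Rightarrow> real"
  assumes "graph V E" and eig: "adj_eigvec V E \<mu> x" and nonneg: "\<forall>v\<in>V. 0 \<le> x v"
    and "u \<in> V" and "0 < x u" and max: "\<forall>v\<in>V. x v \<le> x u"
    and deg: "\<forall>w\<in>nbhd V E u. card (nbhd V E w \<inter> nbhd V E u) \<le> 1"
  shows "\<mu>^2 \<le> \<mu> + real (card (boundary_edges V E (nbhd V E u)))"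
proof -
  define N where "N = nbhd V E u"
  have "N \<subseteq> V"
    unfolding N_def by (rule nbhd_subset)
  have eq: "(\<Sum>w\<in>nbhd V E v. x w) = \<mu> * x v" if "v \<in> V" for v
    using eig that unfolding adj_eigvec_def by blast
  have split: "(\<Sum>w\<in>nbhd V E v. x w) = (\<Sum>w\<in>nbhd V E v \<inter> N. x w) + (\<Sum>w\<in>nbhd V E v - N. x w)" for v
    by (rule sum.Int_Diff[OF finite_nbhd[OF assms(1)]])
  have inner: "(\<Sum>v\<in>N. \<Sum>w\<in>nbhd V E v \<inter> N. x w) \<le> (\<Sum>w\<in>N. x w)"
    unfolding sum_sum_nbhd_Int[OF assms(1) \<open>N \<subseteq> V\<close>]
    by (intro sum_mono mult_left_le_one_le) (use deg nonneg \<open>N \<subseteq> V\<close> in \<open>auto simp: N_def\<close>)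
  have outer: "(\<Sum>w\<in>nbhd V E v - N. x w) \<le> real (card (nbhd V E v - N)) * x u" for v
    by (rule sum_bounded_above) (use max in \<open>auto simp: nbhd_def\<close>)
  have "\<mu>^2 * x u = (\<Sum>v\<in>N. \<mu> * x v)"
    using eq[OF \<open>u \<in> V\<close>] by (simp add: N_def power2_eq_square flip: sum_distrib_left)
  also have "\<dots> = (\<Sum>v\<in>N. \<Sum>w\<in>nbhd V E v. x w)"
    using eq \<open>N \<subseteq> V\<close> by (auto intro!: sum.cong)
  also have "\<dots> = (\<Sum>v\<in>N. \<Sum>w\<in>nbhd V E v \<inter> N. x w) + (\<Sum>v\<in>N. \<Sum>w\<in>nbhd V E v - N. x w)"
    by (simp add: split sum.distrib)
  also have "\<dots> \<le> (\<Sum>w\<in>N. x w) + (\<Sum>v\<in>N. real (card (nbhd V E v - N)) * x u)"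
    by (intro add_mono inner sum_mono outer)
  also have "\<dots> = (\<mu> + real (card (boundary_edges V E N))) * x u"
    using eq[OF \<open>u \<in> V\<close>] card_boundary_edges[OF assms(1) \<open>N \<subseteq> V\<close>]
    by (simp add: N_def distrib_right sum_distrib_right)
  finally show ?thesis
    using \<open>0 < x u\<close> unfolding N_def by simp
qed

lemma H43_free_if_edges_meet_two:
  assumes "\<And>u v. E u v \<Longrightarrow> u \<in> {c1, c2} \<or> v \<in> {c1, c2}"
  shows "H43_free V E"
  unfolding H43_free_def
proof clarify
  fix a b c d e f
  assume "distinct [a, b, c, d, e, f]" "E a b" "E b c" "E c d" "E d a" "E a e" "E e f" "E f a"
  show False
  proof (cases "a \<in> {c1, c2}")
    case True
    then show False
      using assms[OF \<open>E b c\<close>] assms[OF \<open>E e f\<close>] \<open>distinct [a, b, c, d, e, f]\<close> by auto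
  next
    case False
    then show False
      using assms[OF \<open>E a b\<close>] assms[OF \<open>E d a\<close>] assms[OF \<open>E a e\<close>]
        \<open>distinct [a, b, c, d, e, f]\<close> by auto
  qed
qed

text \<open>Spine \<open>0, 1\<close>, pages \<open>3..k+2\<close>, and the pendant vertex \<open>2\<close> attached to \<open>0\<close>.\<close>

definition book_pendant_V :: "nat \<Rightarrow> nat set" where
  "book_pendant_V k = {0..k+2}"

definition book_pendant_E :: "nat \<Rightarrow> nat \<Rightarrow> nat \<Rightarrow> bool" where
  "book_pendant_E k i j \<longleftrightarrow>
     (i = 0 \<and> j \<in> {1, 2}) \<or> (j = 0 \<and> i \<in> {1, 2}) \<or>
     (i \<in> {0, 1} \<and> j \<in> {3..k+2}) \<or> (j \<in> {0, 1} \<and> i \<in> {3..k+2})"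

lemma book_pendant_E_commute: "book_pendant_E k i j \<longleftrightarrow> book_pendant_E k j i"
  unfolding book_pendant_E_def by blast

lemma book_pendant_graph: "graph (book_pendant_V k) (book_pendant_E k)"
  unfolding graph_def
proof (intro conjI allI impI)
  fix u v
  assume "book_pendant_E k u v"
  then show "u \<in> book_pendant_V k" "v \<in> book_pendant_V k" "u \<noteq> v"
    unfolding book_pendant_E_def book_pendant_V_def by auto
  show "book_pendant_E k v u"
    using \<open>book_pendant_E k u v\<close> book_pendant_E_commute by blast
qed (simp add: book_pendant_V_def)

lemma book_pendant_no_isolated: "no_isolated (book_pendant_V k) (book_pendant_E k)"
  unfolding no_isolated_def
proof
  fix v
  assume v: "v \<in> book_pendant_V k"
  show "\<exists>u\<in>book_pendant_V k. book_pendant_E k v u"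
  proof (cases "v = 0")
    case True
    then show ?thesis
      by (intro bexI[of _ 1]) (auto simp: book_pendant_V_def book_pendant_E_def)
  next
    case False
    then show ?thesis
      using v by (intro bexI[of _ 0]) (auto simp: book_pendant_V_def book_pendant_E_def)
  qed
qed

lemma book_pendant_H43_free: "H43_free (book_pendant_V k) (book_pendant_E k)"
  by (rule H43_free_if_edges_meet_two[of _ 0 1]) (auto simp: book_pendant_E_def)

lemma book_pendant_nbhd_0: "nbhd (book_pendant_V k) (book_pendant_E k) 0 = insert 1 (insert 2 {3..k+2})"
  unfolding nbhd_def book_pendant_V_def book_pendant_E_def by (auto simp: set_eq_iff)

lemma book_pendant_nbhd_1: "nbhd (book_pendant_V k) (book_pendant_E k) 1 = insert 0 {3..k+2}"
  unfolding nbhd_def book_pendant_V_def book_pendant_E_def by (auto simp: set_eq_iff)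

lemma book_pendant_nbhd_2: "nbhd (book_pendant_V k) (book_pendant_E k) 2 = {0}"
  unfolding nbhd_def book_pendant_V_def book_pendant_E_def by auto

lemma book_pendant_nbhd_page:
  "l \<in> {3..k+2} \<Longrightarrow> nbhd (book_pendant_V k) (book_pendant_E k) l = {0, 1}"
  unfolding nbhd_def book_pendant_V_def book_pendant_E_def by auto

lemma book_pendant_edges:
  "edges (book_pendant_V k) (book_pendant_E k) = (\<lambda>j. {0, j}) ` {1..k+2} \<union> (\<lambda>j. {1, j}) ` {3..k+2}"
proof (intro equalityI subsetI)
  fix e
  assume "e \<in> edges (book_pendant_V k) (book_pendant_E k)"
  then obtain i j where e: "e = {i, j}" and "book_pendant_E k i j"
    unfolding edges_def by blast
  then consider "i = 0" "j \<in> {1..k+2}" | "j = 0" "i \<in> {1..k+2}" | "i = 1" "j \<in> {3..k+2}" | "j = 1" "i \<in> {3..k+2}"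
    unfolding book_pendant_E_def by fastforce
  then show "e \<in> (\<lambda>j. {0, j}) ` {1..k+2} \<union> (\<lambda>j. {1, j}) ` {3..k+2}"
    unfolding e by cases (simp_all add: insert_commute)
next
  fix e
  assume "e \<in> (\<lambda>j. {0, j}) ` {1..k+2} \<union> (\<lambda>j. {1, j}) ` {3..k+2}"
  then obtain i j where "e = {i, j}" "book_pendant_E k i j" "i \<in> book_pendant_V k" "j \<in> book_pendant_V k"
    unfolding book_pendant_E_def book_pendant_V_def by fastforce
  then show "e \<in> edges (book_pendant_V k) (book_pendant_E k)"
    unfolding edges_def by blast
qed

lemma book_pendant_num_edges: "num_edges (book_pendant_V k) (book_pendant_E k) = 2 * k + 2"
proof -
  have "\<forall>e\<in>(\<lambda>j. {0, j}) ` {1..k+2}. 0 \<in> e" and "\<forall>e\<in>(\<lambda>j. {1::nat, j}) ` {3..k+2}. 0 \<notin> e"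
    by auto
  then have "(\<lambda>j. {0, j}) ` {1..k+2} \<inter> (\<lambda>j. {1::nat, j}) ` {3..k+2} = {}"
    by blast
  moreover have "inj_on (\<lambda>j. {a::nat, j}) A" for a A
    by (auto simp: inj_on_def doubleton_eq_iff)
  ultimately show ?thesis
    unfolding num_edges_def book_pendant_edges by (simp add: card_Un_disjoint card_image)
qed

definition book_pendant_poly :: "nat \<Rightarrow> real poly" where
  "book_pendant_poly k = [:real k, - 2 * real k, - 2 * real k - 2, 0, 1:]"

lemma poly_book_pendant_poly:
  "poly (book_pendant_poly k) t = t^4 - (2 * real k + 2) * t^2 - 2 * real k * t + real k"
  by (simp add: book_pendant_poly_def algebra_simps eval_nat_numeral)

lemma book_pendant_quotient_solution_trivial:
  fixes \<mu> K y0 y1 y2 s :: real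
  assumes "\<mu> * y0 = y1 + y2 + s" "\<mu> * y1 = y0 + s" "\<mu> * y2 = y0" "\<mu> * s = K * (y0 + y1)"
    and "\<mu>^4 - (2 * K + 2) * \<mu>^2 - 2 * K * \<mu> + K \<noteq> 0"
  shows "y0 = 0" and "y1 = 0"
proof -
  \<comment> \<open>The quartic is the determinant of this linear system; the multipliers are rows of its adjugate.\<close>
  have "(\<mu>^4 - (2 * K + 2) * \<mu>^2 - 2 * K * \<mu> + K) * y0 =
      (\<mu>^3 - K * \<mu>) * (\<mu> * y0 - (y1 + y2 + s)) + (\<mu>^2 + K * \<mu>) * (\<mu> * y1 - (y0 + s))
      + (\<mu>^2 - K) * (\<mu> * y2 - y0) + (\<mu>^2 + \<mu>) * (\<mu> * s - K * (y0 + y1))"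
    by (simp add: algebra_simps eval_nat_numeral)
  then show "y0 = 0"
    using assms by simp
  have "(\<mu>^4 - (2 * K + 2) * \<mu>^2 - 2 * K * \<mu> + K) * y1 =
      (\<mu>^2 + K * \<mu>) * (\<mu> * y0 - (y1 + y2 + s)) + (\<mu>^3 - K * \<mu> - \<mu>) * (\<mu> * y1 - (y0 + s))
      + (\<mu> + K) * (\<mu> * y2 - y0) + (\<mu>^2 + \<mu> - 1) * (\<mu> * s - K * (y0 + y1))"
    by (simp add: algebra_simps eval_nat_numeral)
  then show "y1 = 0"
    using assms by simp
qed

lemma book_pendant_V_cases:
  assumes "v \<in> book_pendant_V k"
  obtains "v = 0" | "v = 1" | "v = 2" | "v \<in> {3..k+2}"
  using assms unfolding book_pendant_V_def by fastforce

lemma book_pendant_eigenvalue_root: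
  assumes "adj_eigenvalue (book_pendant_V k) (book_pendant_E k) \<mu>" and "\<mu> \<noteq> 0"
  shows "poly (book_pendant_poly k) \<mu> = 0"
proof (rule ccontr)
  assume root: "poly (book_pendant_poly k) \<mu> \<noteq> 0"
  obtain y where "adj_eigvec (book_pendant_V k) (book_pendant_E k) \<mu> y"
    using assms(1) unfolding adj_eigenvalue_def by blast
  then have nonzero: "\<exists>v\<in>book_pendant_V k. y v \<noteq> 0"
    and eq: "\<And>v. v \<in> book_pendant_V k \<Longrightarrow>
      (\<Sum>u\<in>nbhd (book_pendant_V k) (book_pendant_E k) v. y u) = \<mu> * y v"
    unfolding adj_eigvec_def by blast+
  have V: "0 \<in> book_pendant_V k" "1 \<in> book_pendant_V k" "2 \<in> book_pendant_V k"
    "{3..k+2} \<subseteq> book_pendant_V k"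
    by (auto simp: book_pendant_V_def)
  define s where "s = (\<Sum>l\<in>{3..k+2}. y l)"
  have page: "\<mu> * y l = y 0 + y 1" if "l \<in> {3..k+2}" for l
    using eq[OF subsetD[OF V(4) that]] that by (simp add: book_pendant_nbhd_page)
  have "\<mu> * s = real k * (y 0 + y 1)"
    unfolding s_def sum_distrib_left by (simp add: page)
  moreover have "\<mu> * y 0 = y 1 + y 2 + s"
    using eq[OF V(1)] unfolding book_pendant_nbhd_0 by (simp add: s_def del: sum.cl_ivl_Suc)
  moreover have "\<mu> * y 1 = y 0 + s"
    using eq[OF V(2)] unfolding book_pendant_nbhd_1 by (simp add: s_def del: sum.cl_ivl_Suc)
  moreover have "\<mu> * y 2 = y 0"
    using eq[OF V(3)] unfolding book_pendant_nbhd_2 by simp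
  ultimately have "y 0 = 0" "y 1 = 0"
    using book_pendant_quotient_solution_trivial root unfolding poly_book_pendant_poly by blast+
  have "y v = 0" if "v \<in> book_pendant_V k" for v
    using that
    by (cases rule: book_pendant_V_cases)
      (use \<open>y 0 = 0\<close> \<open>y 1 = 0\<close> page \<open>\<mu> * y 2 = y 0\<close> \<open>\<mu> \<noteq> 0\<close> in auto)
  with nonzero show False
    by blast
qed

lemma finite_book_pendant_eigenvalues: "finite {\<mu>. adj_eigenvalue (book_pendant_V k) (book_pendant_E k) \<mu>}"
proof (rule finite_subset)
  show "{\<mu>. adj_eigenvalue (book_pendant_V k) (book_pendant_E k) \<mu>} \<subseteq> insert 0 {t. poly (book_pendant_poly k) t = 0}"
    using book_pendant_eigenvalue_root by blast
  have "book_pendant_poly k \<noteq> 0"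
    by (simp add: book_pendant_poly_def)
  then show "finite (insert 0 {t. poly (book_pendant_poly k) t = 0})"
    by (simp add: poly_roots_finite)
qed

lemma book_pendant_root_eigenvalue:
  assumes "0 < l" and "poly (book_pendant_poly k) l = 0"
  shows "adj_eigenvalue (book_pendant_V k) (book_pendant_E k) l"
proof -
  define K where "K = real k"
  define y where "y i = (if i = 0 then l * (l^2 - K) else if i = 1 then l^2 + K * l
    else if i = 2 then l^2 - K else l * (l + 1))" for i :: nat
  have root: "l^4 - (2 * K + 2) * l^2 - 2 * K * l + K = 0"
    using assms(2) unfolding poly_book_pendant_poly K_def .
  have pages: "(\<Sum>i\<in>{3..k+2}. y i) = K * (l * (l + 1))"
    by (simp add: y_def K_def)
  have "(\<Sum>u\<in>nbhd (book_pendant_V k) (book_pendant_E k) v. y u) = l * y v"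
    if "v \<in> book_pendant_V k" for v
    using that
  proof (cases rule: book_pendant_V_cases)
    case 1
    show ?thesis
      unfolding 1 book_pendant_nbhd_0 using pages root
      by (simp add: y_def algebra_simps power2_eq_square eval_nat_numeral del: sum.cl_ivl_Suc)
  next
    case 2
    show ?thesis
      unfolding 2 book_pendant_nbhd_1 using pages
      by (simp add: y_def algebra_simps power2_eq_square del: sum.cl_ivl_Suc)
  next
    case 3
    show ?thesis
      unfolding 3 book_pendant_nbhd_2 by (simp add: y_def algebra_simps power2_eq_square)
  next
    case 4
    then show ?thesis
      by (auto simp: book_pendant_nbhd_page y_def algebra_simps power2_eq_square eval_nat_numeral)
  qed
  moreover have "0 < y 1"
    unfolding y_def K_def using assms(1) by (simp add: add_pos_nonneg)
  moreover have "1 \<in> book_pendant_V k"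
    by (simp add: book_pendant_V_def)
  ultimately show ?thesis
    unfolding adj_eigenvalue_def adj_eigvec_def by (metis less_irrefl)
qed

lemma power2_diff_self_mono:
  fixes a b :: real
  assumes "1/2 \<le> a" and "a \<le> b"
  shows "a^2 - a \<le> b^2 - b"
proof -
  have "b^2 - b - (a^2 - a) = (b - a) * (b + a - 1)"
    by (simp add: algebra_simps power2_eq_square)
  moreover have "0 \<le> (b - a) * (b + a - 1)"
    using assms by simp
  ultimately show ?thesis
    by simp
qed

lemma book_pendant_spectral_radius_bound:
  fixes \<rho> :: real
  assumes "spectral_radius (book_pendant_V k) (book_pendant_E k) \<le> \<rho>"
  shows "2 * real k < \<rho>^2 - \<rho>"
proof -
  define K where "K = real k"
  define f where "f t = t^4 - (2 * K + 2) * t^2 - 2 * K * t + K" for t :: real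
  \<comment> \<open>This factorisation turns a root of f into the bound on \<open>t^2 - t\<close>.\<close>
  have f_factor: "f t = (t^2 - t - 2 * K) * (t^2 + t - 1) - t - K" for t
    by (simp add: f_def algebra_simps power2_eq_square eval_nat_numeral)
  have "0 \<le> K"
    by (simp add: K_def)
  have "f 1 \<le> 0"
    using \<open>0 \<le> K\<close> by (simp add: f_def)
  moreover have "f (K + 2) = K^4 + 6 * K^3 + 12 * K^2 + 13 * K + 8"
    by (simp add: f_def algebra_simps power2_eq_square eval_nat_numeral)
  then have "0 \<le> f (K + 2)"
    using \<open>0 \<le> K\<close> by (simp only:) (intro add_nonneg_nonneg mult_nonneg_nonneg zero_le_power; simp)
  moreover have "continuous_on {1..K + 2} f"
    unfolding f_def by (intro continuous_intros)
  ultimately obtain l where "1 \<le> l" and "f l = 0"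
    using IVT'[of f 1 0 "K + 2"] \<open>0 \<le> K\<close> by auto
  then have "(l^2 - l - 2 * K) * (l^2 + l - 1) = l + K"
    using f_factor[of l] by simp
  moreover have "1 \<le> l^2"
    using \<open>1 \<le> l\<close> by (simp add: one_le_power)
  ultimately have l_bound: "2 * K < l^2 - l"
    using \<open>1 \<le> l\<close> \<open>0 \<le> K\<close> by (smt (verit) zero_less_mult_iff)
  have "adj_eigenvalue (book_pendant_V k) (book_pendant_E k) l"
    using \<open>1 \<le> l\<close> \<open>f l = 0\<close>
    by (intro book_pendant_root_eigenvalue) (simp_all add: poly_book_pendant_poly f_def K_def)
  then have "l \<le> spectral_radius (book_pendant_V k) (book_pendant_E k)"
    unfolding spectral_radius_def using finite_book_pendant_eigenvalues by (simp add: Max_ge)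
  then show ?thesis
    using l_bound power2_diff_self_mono[of l \<rho>] \<open>1 \<le> l\<close> assms unfolding K_def by simp
qed

lemma spectral_radius_bound_if_not_induced_connected:
  assumes "graph V E" and "H43_free V E" and "perron_vector V E x"
    and "u \<in> V" and "\<forall>v\<in>V. x v \<le> x u"
    and disconnected: "\<not> induced_connected E (nonisolated_part V E (nbhd V E u))"
  shows "(spectral_radius V E)^2 - spectral_radius V E \<le> real (num_edges V E) - 2"
proof -
  define \<rho> where "\<rho> = spectral_radius V E"
  define N where "N = nbhd V E u"
  have "N \<subseteq> V"
    unfolding N_def by (rule nbhd_subset)
  have "\<forall>v\<in>V. 0 < x v" and "adj_eigvec V E \<rho> x"
    using \<open>perron_vector V E x\<close> unfolding perron_vector_def \<rho>_def by blast+
  then have "\<rho>^2 \<le> \<rho> + real (card (boundary_edges V E N))"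
    unfolding N_def
    using nbhd_degree_le_one_if_not_induced_connected[OF assms(1,2,4) disconnected] assms(4,5)
    by (intro eigenvalue_sq_le_boundary_edges[OF assms(1)]) (simp_all add: less_imp_le)
  moreover obtain a a' b b' where "{a, a', b, b'} \<subseteq> N" "E a a'" "E b b'" "{a, a'} \<noteq> {b, b'}"
    using two_edges_if_not_induced_connected[OF assms(1) \<open>N \<subseteq> V\<close> disconnected[folded N_def]] .
  then have "card (boundary_edges V E N) + 2 \<le> num_edges V E"
    using card_boundary_edges_add_two_le_num_edges[OF assms(1) \<open>N \<subseteq> V\<close>] by blast
  ultimately show ?thesis
    unfolding \<rho>_def by linarith
qed

theorem claim2:
  fixes V :: "'a set" and E :: "'a \<Rightarrow> 'a \<Rightarrow> bool"
    and m :: nat and x :: "'a \<Rightarrow> real" and ustar :: 'a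
  assumes "m \<ge> 38" and "even m"
    and "graph V E" and "H43_free V E" and "num_edges V E = m" and "no_isolated V E"
    and extremal: "\<And>V' (E' :: nat \<Rightarrow> nat \<Rightarrow> bool).
           graph V' E' \<Longrightarrow> H43_free V' E' \<Longrightarrow> num_edges V' E' = m \<Longrightarrow> no_isolated V' E' \<Longrightarrow>
           spectral_radius V' E' \<le> spectral_radius V E"
    and "perron_vector V E x"
    and "ustar \<in> V" and "\<forall>v\<in>V. x v \<le> x ustar"
  shows "induced_connected E {v \<in> nbhd V E ustar. card (nbhd V E v \<inter> nbhd V E ustar) \<ge> 1}"
proof (rule ccontr)
  obtain k where k: "m = 2 * k + 2"
  proof -
    obtain j where "m = 2 * j"
      using \<open>even m\<close> by (rule evenE)
    with \<open>m \<ge> 38\<close> show thesis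
      by (intro that[of "j - 1"]) simp
  qed
  then have "spectral_radius (book_pendant_V k) (book_pendant_E k) \<le> spectral_radius V E"
    by (intro extremal book_pendant_graph book_pendant_H43_free book_pendant_no_isolated)
      (simp add: book_pendant_num_edges)
  then have "2 * real k < (spectral_radius V E)^2 - spectral_radius V E"
    by (rule book_pendant_spectral_radius_bound)
  moreover assume "\<not> ?thesis"
  then have "(spectral_radius V E)^2 - spectral_radius V E \<le> real (num_edges V E) - 2"
    by (intro spectral_radius_bound_if_not_induced_connected[OF assms(3,4,8-10)])
      (simp add: nonisolated_part_def)
  ultimately show False
    using k \<open>num_edges V E = m\<close> by linarith
qed

end
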